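(* Let $\psi\in\Psi$ satisfy $\lim_{t\to\infty}\frac{\psi(t\psi(t))}{\psi(t)}=1$. Then for every positive nonincreasing $x=x^*\in M_\psi$ and every $c>0$, $$\frac1{\log T}\int_1^T\frac{dt}{t\psi(t)}\int_0^{ct\psi(t)}x(s)ds=\frac1{\log T}\int_1^T\frac{dt}{t\psi(t)}\int_0^tx(s)ds+o(1)\quad\text{as }T\to\infty.$$
   Context: $\Psi$ is the class of concave increasing functions $\psi$ on $[0,\infty)$ with $\psi(\infty)=\infty$, $\psi(t)=O(t)$ as $t\to0$, $\psi(t)=o(t)$ as $t\to\infty$. $x^*$ denotes the nonincreasing right-continuous rearrangement of $|x|$. $M_\psi$ is the space of bounded measurable $x$ on $(0,\infty)$ with $\sup_{t>0}\frac1{\psi(t)}\int_0^tx^*(s)ds<\infty$. *)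

theory Defs
  imports "HOL-Analysis.Analysis" "HOL-Library.Landau_Symbols"
begin

definition Psi_class :: "(real \<Rightarrow> real) set" where
  "Psi_class = {\<psi>. concave_on {0..} \<psi> \<and> strict_mono_on {0..} \<psi>
      \<and> filterlim \<psi> at_top at_top
      \<and> \<psi> \<in> O[at_right 0](\<lambda>t. t)
      \<and> \<psi> \<in> o[at_top](\<lambda>t. t)}"

definition distr_fun :: "(real \<Rightarrow> real) \<Rightarrow> real \<Rightarrow> ennreal" where
  "distr_fun x s = emeasure lborel {u \<in> {0<..}. s < \<bar>x u\<bar>}"

definition rearr :: "(real \<Rightarrow> real) \<Rightarrow> real \<Rightarrow> real" where
  "rearr x t = Inf {s. 0 \<le> s \<and> distr_fun x s \<le> ennreal t}"

definition M_psi :: "(real \<Rightarrow> real) \<Rightarrow> (real \<Rightarrow> real) set" where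
  "M_psi \<psi> = {x. x \<in> borel_measurable (restrict_space lborel {0<..})
      \<and> (\<exists>B. \<forall>u>0. \<bar>x u\<bar> \<le> B)
      \<and> (\<exists>C. \<forall>t>0. (1 / \<psi> t) * (LBINT s=0..t. rearr x s) \<le> C)}"

end

theory Submission
  imports Defs
begin

text \<open>
  Let X be the primitive of x, so that X(u) \<le> C \<psi>(u), let g(t) = c t \<psi>(t) (dil below), and
  compare F(t) = X(g(t)) / (t \<psi>(t)) with G(t) = X(t) / (t \<psi>(t)) (integrand_dil and integrand).
  Eventually g(t) \<ge> t, hence F \<ge> G, which bounds the difference of the two integrals from below.

  For the upper bound compare dyadic blocks: the integral of F over [t, 2t] is at most
  X(g(2t)) ln 2 / \<psi>(t), while [g(2t), g(4t)] has logarithmic length at least ln 2, so the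
  integral of G over it is at least X(g(2t)) ln 2 / \<psi>(g(4t)). The hypothesis on \<psi> gives
  \<psi>(g(4t)) \<le> (1 + o(1)) \<psi>(t). Summing over blocks, the integral of F over [1, T] is at most
  O(1) + (1 + o(1)) times the integral of G over [1, g(4T)]; since G(t) \<le> C / t, the part of the
  latter beyond T is at most C ln (g(4T) / T) = O(1) + C ln \<psi>(4T).

  It remains that ln \<psi>(T) = o(ln T). Along the orbit s(k + 1) = s(k) \<psi>(s(k)) the quantity ln \<psi>
  grows by at most ln 2 per step, while ln s grows by at least ln \<psi>(s(0)), which can be taken as
  large as we like.
\<close>

lemma set_integrable_mult_antimono_mono:
  fixes f g :: "real \<Rightarrow> real"
  assumes f: "antimono_on {a..b} f" and g: "mono_on {a..b} g"
  shows "set_integrable lborel {a..b} (\<lambda>x. f x * g x)"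
proof -
  have "(\<lambda>x. - f x) \<in> borel_measurable (restrict_space borel {a..b})"
    using f by (intro borel_measurable_mono_on_fnc) (auto simp: monotone_on_def)
  then have "f \<in> borel_measurable (restrict_space borel {a..b})"
    using borel_measurable_uminus by fastforce
  moreover have "g \<in> borel_measurable (restrict_space borel {a..b})"
    using g by (rule borel_measurable_mono_on_fnc)
  ultimately have "(\<lambda>x. indicator {a..b} x *\<^sub>R (f x * g x)) \<in> borel_measurable lborel"
    by (subst borel_measurable_restrict_space_iff[symmetric]) auto
  moreover have "\<bar>f x * g x\<bar> \<le> (\<bar>f a\<bar> + \<bar>f b\<bar>) * (\<bar>g a\<bar> + \<bar>g b\<bar>)" if "x \<in> {a..b}" for x
  proof -
    have "\<bar>f x\<bar> \<le> \<bar>f a\<bar> + \<bar>f b\<bar>" "\<bar>g x\<bar> \<le> \<bar>g a\<bar> + \<bar>g b\<bar>"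
      using that f[THEN monotone_onD, of a x] f[THEN monotone_onD, of x b]
        g[THEN monotone_onD, of a x] g[THEN monotone_onD, of x b] by auto
    then show ?thesis by (simp add: abs_mult mult_mono)
  qed
  ultimately show ?thesis
    unfolding set_integrable_def
    by (intro integrableI_bounded_set[where A="{a..b}"]) (auto split: split_indicator simp: emeasure_lborel_Icc_eq)
qed

lemma has_integral_const_div:
  fixes a b k :: real
  assumes "0 < a" "a \<le> b"
  shows "((\<lambda>s. k / s) has_integral k * (ln b - ln a)) {a..b}"
proof -
  have "((\<lambda>s. k * (1 / s)) has_integral k * (ln b - ln a)) {a..b}"
    using assms
    by (intro has_integral_mult_right fundamental_theorem_of_calculus)
       (auto intro!: derivative_eq_intros simp: has_real_derivative_iff_has_vector_derivative[symmetric] field_simps)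
  then show ?thesis by simp
qed

lemma integral_le_const_div:
  fixes f :: "real \<Rightarrow> real"
  assumes "0 < a" "a \<le> b" "f integrable_on {a..b}" "\<And>s. s \<in> {a..b} \<Longrightarrow> f s \<le> k / s"
  shows "integral {a..b} f \<le> k * (ln b - ln a)"
  using has_integral_le[OF integrable_integral[OF assms(3)] has_integral_const_div[OF assms(1,2)]] assms(4)
  by blast

lemma integral_ge_const_div:
  fixes f :: "real \<Rightarrow> real"
  assumes "0 < a" "a \<le> b" "f integrable_on {a..b}" "\<And>s. s \<in> {a..b} \<Longrightarrow> k / s \<le> f s"
  shows "k * (ln b - ln a) \<le> integral {a..b} f"
  using has_integral_le[OF has_integral_const_div[OF assms(1,2)] integrable_integral[OF assms(3)]] assms(4)
  by blast

lemma exists_pow2_between: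
  fixes T :: real
  assumes "1 \<le> T"
  shows "\<exists>n. T \<le> 2 ^ n \<and> 2 ^ n \<le> 2 * T"
proof -
  obtain N where "T < 2 ^ N" using real_arch_pow[of 2 T] by auto
  define n where "n = (LEAST n. T \<le> (2::real) ^ n)"
  have least: "T \<le> 2 ^ n" "\<And>m. m < n \<Longrightarrow> \<not> T \<le> 2 ^ m"
    unfolding n_def using \<open>T < 2 ^ N\<close> by (auto intro: LeastI[of _ N] dest: not_less_Least)
  have "2 ^ n \<le> 2 * T"
  proof (cases n)
    case 0
    then show ?thesis using assms by simp
  next
    case (Suc m)
    then show ?thesis using least(2)[of m] by simp
  qed
  with least(1) show ?thesis by blast
qed

locale psi_regular =
  fixes \<psi> :: "real \<Rightarrow> real"
  assumes pos: "\<And>t. 0 < t \<Longrightarrow> 0 < \<psi> t"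
    and mono: "\<And>s t. 0 < s \<Longrightarrow> s \<le> t \<Longrightarrow> \<psi> s \<le> \<psi> t"
    and filterlim_at_top_psi: "filterlim \<psi> at_top at_top"
    and comp_ratio_tendsto: "((\<lambda>t. \<psi> (t * \<psi> t) / \<psi> t) \<longlongrightarrow> 1) at_top"
begin

lemma eventually_ge: "\<forall>\<^sub>F t in at_top. K \<le> \<psi> t"
  using filterlim_at_top_psi by (simp add: filterlim_at_top)

lemma eventually_le_scaled:
  assumes "0 < c"
  shows "\<forall>\<^sub>F t in at_top. t \<le> c * t * \<psi> t"
  using eventually_ge[of "1 / c"] eventually_gt_at_top[of 0]
proof eventually_elim
  case (elim t)
  then have "1 \<le> c * \<psi> t" using assms by (simp add: divide_le_eq mult.commute)
  then have "t * 1 \<le> t * (c * \<psi> t)" using elim by (intro mult_left_mono) auto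
  then show ?case by (simp add: mult_ac)
qed

lemma eventually_comp_le:
  assumes "0 < \<delta>"
  shows "\<forall>\<^sub>F w in at_top. \<psi> (w * \<psi> w) \<le> (1 + \<delta>) * \<psi> w"
proof -
  have "\<forall>\<^sub>F w in at_top. \<psi> (w * \<psi> w) / \<psi> w < 1 + \<delta>"
    using comp_ratio_tendsto assms by (intro order_tendstoD) auto
  with eventually_gt_at_top[of 0] show ?thesis
  proof eventually_elim
    case (elim w)
    then show ?case using pos[of w] by (simp add: divide_less_eq)
  qed
qed

definition orbit :: "real \<Rightarrow> nat \<Rightarrow> real" where
  "orbit s k = ((\<lambda>w. w * \<psi> w) ^^ k) s"

lemma orbit_0 [simp]: "orbit s 0 = s"
  by (simp add: orbit_def)

lemma orbit_Suc: "orbit s (Suc k) = orbit s k * \<psi> (orbit s k)"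
  by (simp add: orbit_def)

context
  fixes \<eta> s0 :: real
  assumes \<eta>: "0 < \<eta>" and s0: "1 \<le> s0"
    and comp_le: "\<And>w. s0 \<le> w \<Longrightarrow> \<psi> (w * \<psi> w) \<le> 2 * \<psi> w"
    and ln_psi_ge: "\<And>w. s0 \<le> w \<Longrightarrow> 2 * ln 2 \<le> \<eta> * ln (\<psi> w)"
begin

lemma psi_gt_1:
  assumes "s0 \<le> w"
  shows "1 < \<psi> w"
proof -
  have "0 < 2 * ln (2::real)" by simp
  then have "0 < \<eta> * ln (\<psi> w)" using ln_psi_ge[OF assms] by linarith
  then have "0 < ln (\<psi> w)" using \<eta> by (simp add: zero_less_mult_iff)
  then show ?thesis using pos[of w] assms s0 by simp
qed

lemma orbit_gain:
  "s0 \<le> orbit s0 k \<and> \<eta> * ln s0 - ln (\<psi> s0) + k * ln 2 \<le> \<eta> * ln (orbit s0 k) - ln (\<psi> (orbit s0 k))"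
proof (induction k)
  case 0
  show ?case by simp
next
  case (Suc k)
  define w where "w = orbit s0 k"
  have w: "s0 \<le> w" "1 < \<psi> w" and IH: "\<eta> * ln s0 - ln (\<psi> s0) + k * ln 2 \<le> \<eta> * ln w - ln (\<psi> w)"
    using Suc psi_gt_1 unfolding w_def by auto
  have "w * 1 \<le> w * \<psi> w" using w s0 by (intro mult_left_mono) auto
  then have step: "s0 \<le> w * \<psi> w" using w by simp
  have "ln (\<psi> (w * \<psi> w)) \<le> ln (2 * \<psi> w)"
    using comp_le[OF w(1)] psi_gt_1[OF step] by simp
  also have "\<dots> = ln 2 + ln (\<psi> w)" using w by (simp add: ln_mult)
  finally have "ln (\<psi> (w * \<psi> w)) \<le> ln 2 + ln (\<psi> w)" .
  moreover have "ln (w * \<psi> w) = ln w + ln (\<psi> w)" using w s0 by (simp add: ln_mult)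
  moreover note ln_psi_ge[OF w(1)] IH
  ultimately show ?case using step unfolding orbit_Suc w_def[symmetric] by (simp add: algebra_simps)
qed

lemma ln_psi_le_below_orbit:
  assumes "s0 \<le> T" "T \<le> orbit s0 k"
  shows "ln (\<psi> T) \<le> \<eta> * ln T + ln 2 - (\<eta> * ln s0 - ln (\<psi> s0))"
  using assms(2)
proof (induction k)
  case 0
  then show ?case using assms(1) by simp
next
  case (Suc k)
  define w where "w = orbit s0 k"
  show ?case
  proof (cases "T \<le> w")
    case True
    then show ?thesis using Suc.IH unfolding w_def by blast
  next
    case False
    have w: "s0 \<le> w" "1 < \<psi> w" and gain: "\<eta> * ln s0 - ln (\<psi> s0) + k * ln 2 \<le> \<eta> * ln w - ln (\<psi> w)"
      using orbit_gain[of k] psi_gt_1 unfolding w_def by auto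
    have "ln (\<psi> T) \<le> ln (\<psi> (w * \<psi> w))"
      using Suc.prems assms(1) s0 psi_gt_1[OF assms(1)] mono[of T "w * \<psi> w"]
      unfolding orbit_Suc w_def[symmetric] by simp
    also have "\<dots> \<le> ln (2 * \<psi> w)"
      using comp_le[OF w(1)] pos[of "w * \<psi> w"] w s0 by simp
    also have "\<dots> = ln 2 + ln (\<psi> w)" using w by (simp add: ln_mult)
    finally have "ln (\<psi> T) \<le> ln 2 + ln (\<psi> w)" .
    moreover have "\<eta> * ln w \<le> \<eta> * ln T" using False w s0 \<eta> by (intro mult_left_mono) auto
    moreover have "0 \<le> real k * ln 2" by simp
    ultimately show ?thesis using gain by linarith
  qed
qed

lemma orbit_unbounded: "\<exists>k. T \<le> orbit s0 k"
proof -
  obtain k :: nat where "(\<eta> * ln (max T 1) - (\<eta> * ln s0 - ln (\<psi> s0))) / ln 2 \<le> k"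
    using real_arch_simple by blast
  then have "\<eta> * ln (max T 1) \<le> \<eta> * ln s0 - ln (\<psi> s0) + k * ln 2"
    by (simp add: divide_le_eq algebra_simps)
  also have "\<dots> \<le> \<eta> * ln (orbit s0 k)"
  proof -
    have "0 < ln (\<psi> (orbit s0 k))" using orbit_gain[of k] psi_gt_1[of "orbit s0 k"] by simp
    then show ?thesis using orbit_gain[of k] by linarith
  qed
  finally have "ln (max T 1) \<le> ln (orbit s0 k)" using \<eta> by simp
  then have "max T 1 \<le> orbit s0 k" using orbit_gain[of k] s0 by simp
  then show ?thesis by auto
qed

end

lemma ln_psi_le_linear:
  assumes \<eta>: "0 < \<eta>"
  shows "\<exists>M. \<forall>\<^sub>F T in at_top. ln (\<psi> T) \<le> \<eta> * ln T + M"
proof -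
  have "\<forall>\<^sub>F w in at_top. 2 * ln 2 / \<eta> \<le> ln (\<psi> w)"
    using filterlim_compose[OF ln_at_top filterlim_at_top_psi] by (simp add: filterlim_at_top)
  with eventually_ge_at_top[of 1] eventually_comp_le[OF zero_less_one]
  have "\<forall>\<^sub>F w in at_top. 1 \<le> w \<and> \<psi> (w * \<psi> w) \<le> 2 * \<psi> w \<and> 2 * ln 2 \<le> \<eta> * ln (\<psi> w)"
    by eventually_elim (use \<eta> in \<open>auto simp: divide_le_eq mult.commute\<close>)
  then obtain s0 where s0: "\<And>w. s0 \<le> w \<Longrightarrow> 1 \<le> w \<and> \<psi> (w * \<psi> w) \<le> 2 * \<psi> w \<and> 2 * ln 2 \<le> \<eta> * ln (\<psi> w)"
    by (auto simp: eventually_at_top_linorder)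
  have "\<forall>\<^sub>F T in at_top. ln (\<psi> T) \<le> \<eta> * ln T + (ln 2 - (\<eta> * ln s0 - ln (\<psi> s0)))"
    using eventually_ge_at_top[of s0]
  proof eventually_elim
    case (elim T)
    obtain k where "T \<le> orbit s0 k" using orbit_unbounded[OF \<eta>, of s0] s0 by blast
    then show ?case using ln_psi_le_below_orbit[OF \<eta>, of s0 T k] s0 elim by auto
  qed
  then show ?thesis by blast
qed

lemma ln_psi_smallo: "(\<lambda>t. ln (\<psi> t)) \<in> o(\<lambda>t. ln t)"
proof (rule landau_o.smallI)
  fix \<eta> :: real
  assume "0 < \<eta>"
  then obtain M where "\<forall>\<^sub>F T in at_top. ln (\<psi> T) \<le> \<eta> / 2 * ln T + M"
    using ln_psi_le_linear[of "\<eta> / 2"] by auto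
  moreover have "\<forall>\<^sub>F T in at_top. 2 * M / \<eta> \<le> ln T"
    using ln_at_top by (simp add: filterlim_at_top)
  ultimately show "\<forall>\<^sub>F T in at_top. norm (ln (\<psi> T)) \<le> \<eta> * norm (ln T)"
    using eventually_ge[of 1] eventually_ge_at_top[of 1]
  proof eventually_elim
    case (elim T)
    then have "M \<le> \<eta> / 2 * ln T" using \<open>0 < \<eta>\<close> by (simp add: divide_le_eq mult.commute)
    then show ?case using elim by simp
  qed
qed

lemma eventually_dilation_le:
  assumes c: "0 < c" and K: "1 < K"
  shows "\<forall>\<^sub>F t in at_top. \<psi> (c * (4 * t) * \<psi> (4 * t)) \<le> K * \<psi> t"
proof -
  define \<delta> where "\<delta> = min 1 ((K - 1) / 3)"
  have \<delta>: "0 < \<delta>" "\<delta> \<le> 1" "3 * \<delta> \<le> K - 1" using K unfolding \<delta>_def by (auto simp: min_def)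
  have "\<delta> * \<delta> \<le> \<delta> * 1" using \<delta> by (intro mult_left_mono) auto
  moreover have "(1 + \<delta>) * (1 + \<delta>) = 1 + 2 * \<delta> + \<delta> * \<delta>" by (simp add: algebra_simps)
  ultimately have K_ge: "(1 + \<delta>) * (1 + \<delta>) \<le> K" using \<delta> by linarith
  obtain N where N: "\<And>w. N \<le> w \<Longrightarrow> \<psi> (w * \<psi> w) \<le> (1 + \<delta>) * \<psi> w"
    using eventually_comp_le[OF \<delta>(1)] by (auto simp: eventually_at_top_linorder)
  show ?thesis
    using eventually_ge[of "max 4 (8 * c)"] eventually_ge_at_top[of "max N 1"]
  proof eventually_elim
    case (elim t)
    then have t: "0 < t" "N \<le> t" "4 \<le> \<psi> t" "8 * c \<le> \<psi> t" by auto
    define w where "w = t * \<psi> t"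
    have "t * 4 \<le> t * \<psi> t" using t by (intro mult_left_mono) auto
    then have w: "4 * t \<le> w" "t \<le> w" "0 < w" unfolding w_def using t by auto
    have psi_w: "\<psi> w \<le> (1 + \<delta>) * \<psi> t" using N[OF t(2)] unfolding w_def .
    have "(1 + \<delta>) * \<psi> t \<le> 2 * \<psi> t" using \<delta> pos[OF t(1)] by (intro mult_right_mono) auto
    then have "\<psi> (4 * t) \<le> 2 * \<psi> t" using mono[of "4 * t" w] w t psi_w by linarith
    then have "c * (4 * t) * \<psi> (4 * t) \<le> c * (4 * t) * (2 * \<psi> t)"
      using c t by (intro mult_left_mono) auto
    also have "\<dots> = (8 * c) * w" unfolding w_def by simp
    also have "\<dots> \<le> \<psi> w * w" using t w mono[of t w] by (intro mult_right_mono) auto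
    finally have "\<psi> (c * (4 * t) * \<psi> (4 * t)) \<le> \<psi> (w * \<psi> w)"
      using c t pos[of "4 * t"] by (intro mono) (auto simp: mult.commute)
    also have "\<dots> \<le> (1 + \<delta>) * \<psi> w" using N t w by simp
    also have "\<dots> \<le> (1 + \<delta>) * ((1 + \<delta>) * \<psi> t)" using psi_w \<delta> by (intro mult_left_mono) auto
    also have "\<dots> \<le> K * \<psi> t" using K_ge pos[OF t(1)] by (simp add: mult.assoc[symmetric] mult_right_mono)
    finally show ?case .
  qed
qed

lemma eventually_ln_dilation_le:
  assumes c: "0 < c" and \<eta>: "0 < \<eta>"
  shows "\<forall>\<^sub>F T in at_top. ln (c * (4 * T) * \<psi> (4 * T)) - ln T \<le> \<eta> * ln T"
proof -
  obtain N where N: "\<And>w. N \<le> w \<Longrightarrow> \<psi> (w * \<psi> w) \<le> (1 + 1) * \<psi> w"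
    using eventually_comp_le[OF zero_less_one] by (auto simp: eventually_at_top_linorder)
  have "\<forall>\<^sub>F T in at_top. norm (ln (\<psi> T)) \<le> \<eta> / 2 * norm (ln T)"
    using ln_psi_smallo \<eta> by (intro landau_o.smallD) auto
  moreover have "\<forall>\<^sub>F T in at_top. 2 * ln (8 * c) / \<eta> \<le> ln T"
    using ln_at_top by (simp add: filterlim_at_top)
  ultimately show ?thesis
    using eventually_ge[of 4] eventually_ge_at_top[of "max N 1"]
  proof eventually_elim
    case (elim T)
    then have T: "1 \<le> T" "N \<le> T" "4 \<le> \<psi> T" by auto
    have "T * 4 \<le> T * \<psi> T" using T by (intro mult_left_mono) auto
    then have "\<psi> (4 * T) \<le> \<psi> (T * \<psi> T)" using T by (intro mono) (auto simp: mult.commute)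
    also have "\<dots> \<le> 2 * \<psi> T" using N[OF T(2)] by simp
    finally have "ln (\<psi> (4 * T)) \<le> ln (2 * \<psi> T)" using T pos[of "4 * T"] by simp
    then have "ln (\<psi> (4 * T)) \<le> ln 2 + ln (\<psi> T)" using T by (simp add: ln_mult)
    moreover have "ln (c * (4 * T) * \<psi> (4 * T)) = ln (4 * c) + ln T + ln (\<psi> (4 * T))"
      using c T pos[of "4 * T"] by (simp add: ln_mult mult_ac)
    moreover have "ln (8 * c) = ln 2 + ln (4 * c)" using c ln_mult[of 2 "4 * c"] by simp
    moreover have "ln (\<psi> T) \<le> \<eta> / 2 * ln T" using elim T by simp
    moreover have "ln (8 * c) \<le> \<eta> / 2 * ln T" using elim \<eta> by (simp add: divide_le_eq mult.commute)
    ultimately show ?case by (simp add: algebra_simps)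
  qed
qed

end

locale psi_primitive = psi_regular +
  fixes X :: "real \<Rightarrow> real" and c C :: real
  assumes X_nonneg: "\<And>u. 0 \<le> u \<Longrightarrow> 0 \<le> X u"
    and X_mono: "\<And>u v. 0 \<le> u \<Longrightarrow> u \<le> v \<Longrightarrow> X u \<le> X v"
    and X_le: "\<And>u. 0 < u \<Longrightarrow> X u \<le> C * \<psi> u"
    and c_pos: "0 < c"
begin

abbreviation dil :: "real \<Rightarrow> real" where "dil t \<equiv> c * t * \<psi> t"

definition integrand :: "real \<Rightarrow> real" where
  "integrand t = 1 / (t * \<psi> t) * X t"

definition integrand_dil :: "real \<Rightarrow> real" where
  "integrand_dil t = 1 / (t * \<psi> t) * X (dil t)"

lemma C_nonneg: "0 \<le> C"
proof -
  have "0 \<le> C * \<psi> 1" using X_nonneg[of 1] X_le[of 1] by simp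
  then show ?thesis using pos[of 1] by (simp add: zero_le_mult_iff)
qed

lemma dil_pos: "0 < t \<Longrightarrow> 0 < dil t"
  using pos[of t] c_pos by simp

lemma dil_mono: "0 < s \<Longrightarrow> s \<le> t \<Longrightarrow> dil s \<le> dil t"
  using mono[of s t] pos[of s] c_pos by (intro mult_mono mult_left_mono) auto

lemma antimono_on_weight:
  assumes "0 < a"
  shows "antimono_on {a..b} (\<lambda>t. 1 / (t * \<psi> t))"
proof (intro monotone_onI)
  fix s t assume "s \<in> {a..b}" "t \<in> {a..b}" "s \<le> t"
  then show "1 / (t * \<psi> t) \<le> 1 / (s * \<psi> s)"
    using assms mono[of s t] pos[of s] by (intro divide_left_mono mult_mono) auto
qed

lemma set_integrable_integrand: "0 < a \<Longrightarrow> set_integrable lborel {a..b} integrand"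
  unfolding integrand_def[abs_def]
  by (intro set_integrable_mult_antimono_mono antimono_on_weight) (auto intro!: monotone_onI X_mono)

lemma set_integrable_integrand_dil: "0 < a \<Longrightarrow> set_integrable lborel {a..b} integrand_dil"
  unfolding integrand_dil_def[abs_def]
  by (intro set_integrable_mult_antimono_mono antimono_on_weight)
     (auto intro!: monotone_onI X_mono dil_mono less_imp_le[OF dil_pos])

lemma integrable_integrand: "0 < a \<Longrightarrow> integrand integrable_on {a..b}"
  by (rule set_borel_integral_eq_integral(1)[OF set_integrable_integrand])

lemma integrable_integrand_dil: "0 < a \<Longrightarrow> integrand_dil integrable_on {a..b}"
  by (rule set_borel_integral_eq_integral(1)[OF set_integrable_integrand_dil])

lemma integrand_nonneg: "0 < t \<Longrightarrow> 0 \<le> integrand t"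
  unfolding integrand_def using pos[of t] X_nonneg[of t] by simp

lemma integrand_dil_nonneg: "0 < t \<Longrightarrow> 0 \<le> integrand_dil t"
  unfolding integrand_dil_def using pos[of t] X_nonneg[of "dil t"] dil_pos[of t] by simp

lemma integral_integrand_combine:
  "0 < a \<Longrightarrow> a \<le> m \<Longrightarrow> m \<le> b \<Longrightarrow>
    integral {a..b} integrand = integral {a..m} integrand + integral {m..b} integrand"
  using integrable_integrand by (intro Henstock_Kurzweil_Integration.integral_combine[symmetric]) auto

lemma integral_integrand_dil_combine:
  "0 < a \<Longrightarrow> a \<le> m \<Longrightarrow> m \<le> b \<Longrightarrow>
    integral {a..b} integrand_dil = integral {a..m} integrand_dil + integral {m..b} integrand_dil"
  using integrable_integrand_dil by (intro Henstock_Kurzweil_Integration.integral_combine[symmetric]) auto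

lemma integral_integrand_nonneg: "0 < a \<Longrightarrow> 0 \<le> integral {a..b} integrand"
  using integrable_integrand integrand_nonneg by (intro integral_nonneg) auto

lemma integral_integrand_dil_nonneg: "0 < a \<Longrightarrow> 0 \<le> integral {a..b} integrand_dil"
  using integrable_integrand_dil integrand_dil_nonneg by (intro integral_nonneg) auto

lemma integral_integrand_le:
  assumes "0 < a" "a \<le> b"
  shows "integral {a..b} integrand \<le> C * (ln b - ln a)"
proof (rule integral_le_const_div[OF assms integrable_integrand[OF assms(1)]])
  fix s assume "s \<in> {a..b}"
  then have s: "0 < s" using assms by auto
  have "integrand s \<le> 1 / (s * \<psi> s) * (C * \<psi> s)"
    unfolding integrand_def using X_le[OF s] pos[OF s] s by (intro mult_left_mono) auto
  then show "integrand s \<le> C / s" using pos[OF s] by simp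
qed

lemma integral_integrand_dil_double_le:
  assumes t: "0 < t"
  shows "integral {t..2 * t} integrand_dil \<le> X (dil (2 * t)) / \<psi> t * ln 2"
proof -
  have "integral {t..2 * t} integrand_dil \<le> X (dil (2 * t)) / \<psi> t * (ln (2 * t) - ln t)"
  proof (rule integral_le_const_div[OF t _ integrable_integrand_dil[OF t]])
    fix s assume "s \<in> {t..2 * t}"
    then have s: "0 < s" "t \<le> s" "s \<le> 2 * t" using t by auto
    have "integrand_dil s \<le> 1 / (s * \<psi> s) * X (dil (2 * t))"
      unfolding integrand_dil_def using s pos[of s] dil_pos[of s]
      by (intro mult_left_mono X_mono dil_mono) auto
    also have "\<dots> \<le> 1 / (s * \<psi> t) * X (dil (2 * t))"
      using s t X_nonneg[of "dil (2 * t)"] dil_pos[of "2 * t"] pos[of t] mono[of t s]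
      by (intro mult_right_mono divide_left_mono mult_left_mono) auto
    finally show "integrand_dil s \<le> X (dil (2 * t)) / \<psi> t / s" by (simp add: mult.commute)
  qed (use t in simp)
  also have "\<dots> = X (dil (2 * t)) / \<psi> t * ln 2" using t by (simp add: ln_mult)
  finally show ?thesis .
qed

lemma integral_integrand_ge:
  assumes a: "0 < a" and ab: "2 * a \<le> b"
  shows "X a / \<psi> b * ln 2 \<le> integral {a..b} integrand"
proof -
  have "ln (2 * a) \<le> ln b" using a ab by simp
  then have "ln 2 \<le> ln b - ln a" using a ln_mult[of 2 a] by simp
  then have "X a / \<psi> b * ln 2 \<le> X a / \<psi> b * (ln b - ln a)"
    using a ab X_nonneg[of a] pos[of b] by (intro mult_left_mono) auto
  also have "\<dots> \<le> integral {a..b} integrand"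
  proof (rule integral_ge_const_div[OF a _ integrable_integrand[OF a]])
    fix u assume "u \<in> {a..b}"
    then have u: "0 < u" "a \<le> u" "u \<le> b" using a by auto
    have "1 / (u * \<psi> b) * X a \<le> 1 / (u * \<psi> u) * X u"
      using u a X_nonneg[of a] pos[of u] mono[of u b] X_mono[of a u]
      by (intro mult_mono divide_left_mono mult_left_mono) auto
    then show "X a / \<psi> b / u \<le> integrand u" unfolding integrand_def by (simp add: mult.commute)
  qed (use a ab in simp)
  finally show ?thesis .
qed

lemma integral_dil_block_le:
  assumes t: "0 < t" and K: "\<psi> (dil (4 * t)) \<le> K * \<psi> t"
  shows "integral {t..2 * t} integrand_dil \<le> K * integral {dil (2 * t)..dil (4 * t)} integrand"
proof -
  define a b where "a = dil (2 * t)" and "b = dil (4 * t)"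
  have "c * (4 * t) * \<psi> (2 * t) \<le> c * (4 * t) * \<psi> (4 * t)"
    using mono[of "2 * t" "4 * t"] c_pos t by (intro mult_left_mono) auto
  then have ab: "0 < a" "2 * a \<le> b" unfolding a_def b_def using dil_pos[of "2 * t"] t by auto
  have psi_b: "0 < \<psi> b" and Xa: "0 \<le> X a" using pos X_nonneg ab by simp_all
  have "0 < K * \<psi> t" using K psi_b unfolding b_def by linarith
  then have "0 < K" using pos[OF t] by (simp add: zero_less_mult_iff)
  have "X a * \<psi> b \<le> X a * (K * \<psi> t)" using K Xa unfolding b_def by (intro mult_left_mono) auto
  then have "X a / \<psi> t \<le> K * (X a / \<psi> b)" using psi_b pos[OF t] by (simp add: field_simps)
  then have "X a / \<psi> t * ln 2 \<le> K * (X a / \<psi> b) * ln 2" by (rule mult_right_mono) simp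
  also have "\<dots> = K * (X a / \<psi> b * ln 2)" by simp
  also have "\<dots> \<le> K * integral {a..b} integrand"
    using integral_integrand_ge[OF ab] \<open>0 < K\<close> by (intro mult_left_mono) auto
  finally show ?thesis
    using integral_integrand_dil_double_le[OF t] unfolding a_def b_def by linarith
qed

lemma integral_dil_dyadic_le:
  assumes t0: "0 < t0" and K: "\<And>t. t0 \<le> t \<Longrightarrow> \<psi> (dil (4 * t)) \<le> K * \<psi> t"
  shows "integral {t0..2 ^ n * t0} integrand_dil \<le> K * integral {dil (2 * t0)..dil (2 ^ Suc n * t0)} integrand"
proof (induction n)
  case 0
  show ?case by simp
next
  case (Suc n)
  define t where "t = 2 ^ n * t0"
  have t: "t0 \<le> t" "0 < t" using t0 by (simp_all add: t_def)
  have pow: "2 ^ Suc n * t0 = 2 * t" "2 ^ Suc (Suc n) * t0 = 4 * t" by (simp_all add: t_def)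
  have IH: "integral {t0..t} integrand_dil \<le> K * integral {dil (2 * t0)..dil (2 * t)} integrand"
    using Suc.IH unfolding t_def pow(1)[unfolded t_def] .
  have "integral {t0..2 * t} integrand_dil = integral {t0..t} integrand_dil + integral {t..2 * t} integrand_dil"
    using t t0 by (intro integral_integrand_dil_combine) auto
  also have "\<dots> \<le> K * integral {dil (2 * t0)..dil (2 * t)} integrand + K * integral {dil (2 * t)..dil (4 * t)} integrand"
    using IH integral_dil_block_le[OF t(2) K[OF t(1)]] by simp
  also have "\<dots> = K * integral {dil (2 * t0)..dil (4 * t)} integrand"
    using dil_pos[of "2 * t0"] dil_mono[of "2 * t0" "2 * t"] dil_mono[of "2 * t" "4 * t"] t t0
    by (simp add: integral_integrand_combine[of "dil (2 * t0)" "dil (2 * t)" "dil (4 * t)"] distrib_left)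
  finally show ?case unfolding pow .
qed

lemma integral_integrand_le_tail:
  assumes "1 \<le> a" "a \<le> b" "1 \<le> T" "T \<le> b"
  shows "integral {a..b} integrand \<le> integral {1..T} integrand + C * (ln b - ln T)"
proof -
  have "integral {a..b} integrand \<le> integral {1..b} integrand"
    using assms integral_integrand_combine[of 1 a b] integral_integrand_nonneg[of 1 a] by simp
  also have "\<dots> = integral {1..T} integrand + integral {T..b} integrand"
    using assms by (intro integral_integrand_combine) auto
  also have "integral {T..b} integrand \<le> C * (ln b - ln T)"
    using assms by (intro integral_integrand_le) auto
  finally show ?thesis by simp
qed

lemma integral_diff_le:
  assumes t0: "1 \<le> t0" and K: "1 \<le> K" "\<And>t. t0 \<le> t \<Longrightarrow> \<psi> (dil (4 * t)) \<le> K * \<psi> t"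
    and dil_ge: "\<And>t. t0 \<le> t \<Longrightarrow> t \<le> dil t" and T: "t0 \<le> T"
  shows "integral {1..T} integrand_dil - integral {1..T} integrand
    \<le> integral {1..t0} integrand_dil + (K - 1) * C * ln T + K * C * (ln (dil (4 * T)) - ln T)"
proof -
  obtain n where n: "T / t0 \<le> 2 ^ n" "2 ^ n \<le> 2 * (T / t0)"
    using exists_pow2_between[of "T / t0"] t0 T by auto
  define U where "U = 2 ^ n * t0"
  have U: "T \<le> U" "2 * U \<le> 4 * T" using n t0 by (simp_all add: U_def field_simps)
  have "integral {1..T} integrand_dil \<le> integral {1..U} integrand_dil"
    using integral_integrand_dil_combine[of 1 T U] integral_integrand_dil_nonneg[of T U] T t0 U by simp
  also have "\<dots> = integral {1..t0} integrand_dil + integral {t0..U} integrand_dil"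
    using T t0 U by (intro integral_integrand_dil_combine) auto
  also have "integral {t0..U} integrand_dil \<le> K * integral {dil (2 * t0)..dil (2 * U)} integrand"
    using integral_dil_dyadic_le[of t0 K n] t0 K(2) by (simp add: U_def mult.assoc)
  finally have dil_part: "integral {1..T} integrand_dil
      \<le> integral {1..t0} integrand_dil + K * integral {dil (2 * t0)..dil (2 * U)} integrand" by simp
  have "2 * t0 \<le> dil (2 * t0)" "2 * U \<le> dil (2 * U)"
    using t0 T U by (intro dil_ge; simp)+
  moreover have "dil (2 * t0) \<le> dil (2 * U)" "dil (2 * U) \<le> dil (4 * T)"
    using t0 T U by (intro dil_mono; simp)+
  ultimately have tail: "integral {dil (2 * t0)..dil (2 * U)} integrand
      \<le> integral {1..T} integrand + C * (ln (dil (2 * U)) - ln T)"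
    and "ln (dil (2 * U)) \<le> ln (dil (4 * T))"
    using t0 T U by (intro integral_integrand_le_tail ln_mono; linarith)+
  then have "C * (ln (dil (2 * U)) - ln T) \<le> C * (ln (dil (4 * T)) - ln T)"
    using C_nonneg by (intro mult_left_mono) auto
  with tail have "integral {dil (2 * t0)..dil (2 * U)} integrand
      \<le> integral {1..T} integrand + C * (ln (dil (4 * T)) - ln T)" by linarith
  then have "K * integral {dil (2 * t0)..dil (2 * U)} integrand
      \<le> K * (integral {1..T} integrand + C * (ln (dil (4 * T)) - ln T))"
    using K by (intro mult_left_mono) auto
  moreover have "(K - 1) * integral {1..T} integrand \<le> (K - 1) * (C * (ln T - ln 1))"
    using K t0 T by (intro mult_left_mono integral_integrand_le) auto
  ultimately show ?thesis using dil_part by (simp add: algebra_simps)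
qed

lemma eventually_integral_diff_le:
  assumes \<epsilon>: "0 < \<epsilon>"
  shows "\<forall>\<^sub>F T in at_top. integral {1..T} integrand_dil - integral {1..T} integrand \<le> \<epsilon> * ln T"
proof -
  define K where "K = 1 + \<epsilon> / (3 * (C + 1))"
  define \<eta> where "\<eta> = \<epsilon> / (3 * K * (C + 1))"
  have C1: "0 < C + 1" "C / (C + 1) \<le> 1" using C_nonneg by simp_all
  have K: "1 < K" using \<epsilon> C1 by (simp add: K_def)
  have \<eta>: "0 < \<eta>" using \<epsilon> C1 K by (simp add: \<eta>_def)
  have "(K - 1) * C = \<epsilon> / 3 * (C / (C + 1))" using C1 by (simp add: K_def field_simps)
  moreover have "K * \<eta> = \<epsilon> / (3 * (C + 1))" using K by (simp add: \<eta>_def)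
  then have "K * C * \<eta> = \<epsilon> / 3 * (C / (C + 1))" by (simp add: mult.commute mult.left_commute)
  moreover have "\<epsilon> / 3 * (C / (C + 1)) \<le> \<epsilon> / 3" using mult_left_mono[OF C1(2), of "\<epsilon> / 3"] \<epsilon> by simp
  ultimately have small: "(K - 1) * C \<le> \<epsilon> / 3" "K * C * \<eta> \<le> \<epsilon> / 3" by simp_all
  have "\<forall>\<^sub>F t in at_top. \<psi> (dil (4 * t)) \<le> K * \<psi> t \<and> t \<le> dil t"
    using eventually_dilation_le[OF c_pos K] eventually_le_scaled[OF c_pos] by eventually_elim auto
  then obtain t0 where t0: "\<And>t. t0 \<le> t \<Longrightarrow> \<psi> (dil (4 * t)) \<le> K * \<psi> t \<and> t \<le> dil t"
    by (auto simp: eventually_at_top_linorder)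
  define t1 where "t1 = max t0 1"
  have "\<forall>\<^sub>F T in at_top. 3 * integral {1..t1} integrand_dil / \<epsilon> \<le> ln T"
    using ln_at_top by (simp add: filterlim_at_top)
  with eventually_ln_dilation_le[OF c_pos \<eta>] eventually_ge_at_top[of t1]
  show ?thesis
  proof eventually_elim
    case (elim T)
    then have T: "t1 \<le> T" "0 \<le> ln T" by (auto simp: t1_def)
    have "integral {1..T} integrand_dil - integral {1..T} integrand
        \<le> integral {1..t1} integrand_dil + (K - 1) * C * ln T + K * C * (ln (dil (4 * T)) - ln T)"
      using t0 K T by (intro integral_diff_le) (auto simp: t1_def)
    moreover have "integral {1..t1} integrand_dil \<le> \<epsilon> / 3 * ln T"
      using elim \<epsilon> by (simp add: divide_le_eq mult.commute)
    moreover have "(K - 1) * C * ln T \<le> \<epsilon> / 3 * ln T"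
      using small T by (intro mult_right_mono) auto
    moreover have "K * C * (ln (dil (4 * T)) - ln T) \<le> K * C * (\<eta> * ln T)"
      using elim K C_nonneg by (intro mult_left_mono) auto
    moreover have "K * C * (\<eta> * ln T) \<le> \<epsilon> / 3 * ln T"
      using small T mult_right_mono[OF small(2) T(2)] by (simp add: mult.assoc)
    ultimately show ?case by linarith
  qed
qed

lemma eventually_integral_diff_ge:
  "\<exists>B. \<forall>\<^sub>F T in at_top. B \<le> integral {1..T} integrand_dil - integral {1..T} integrand"
proof -
  obtain t0 where t0: "\<And>t. t0 \<le> t \<Longrightarrow> t \<le> dil t"
    using eventually_le_scaled[OF c_pos] by (auto simp: eventually_at_top_linorder)
  define t1 where "t1 = max t0 1"
  have "integral {1..t1} integrand_dil - integral {1..t1} integrand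
      \<le> integral {1..T} integrand_dil - integral {1..T} integrand" if T: "t1 \<le> T" for T
  proof -
    have "integral {t1..T} integrand \<le> integral {t1..T} integrand_dil"
    proof (rule integral_le[OF integrable_integrand integrable_integrand_dil])
      fix t assume "t \<in> {t1..T}"
      then have t: "0 < t" "t \<le> dil t" using t0 by (auto simp: t1_def)
      then show "integrand t \<le> integrand_dil t"
        unfolding integrand_def integrand_dil_def using pos[of t] by (intro mult_left_mono X_mono) auto
    qed (auto simp: t1_def)
    then show ?thesis
      using T integral_integrand_combine[of 1 t1 T] integral_integrand_dil_combine[of 1 t1 T]
      by (simp add: t1_def)
  qed
  then show ?thesis using eventually_ge_at_top[of t1] by (blast intro: eventually_mono)
qed

lemma integral_diff_smallo:
  "(\<lambda>T. integral {1..T} integrand_dil - integral {1..T} integrand) \<in> o(\<lambda>T. ln T)"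
proof (rule landau_o.smallI)
  fix \<epsilon> :: real
  assume \<epsilon>: "0 < \<epsilon>"
  obtain B where "\<forall>\<^sub>F T in at_top. B \<le> integral {1..T} integrand_dil - integral {1..T} integrand"
    using eventually_integral_diff_ge by blast
  moreover have "\<forall>\<^sub>F T in at_top. - B / \<epsilon> \<le> ln T"
    using ln_at_top by (simp add: filterlim_at_top)
  ultimately show "\<forall>\<^sub>F T in at_top. norm (integral {1..T} integrand_dil - integral {1..T} integrand) \<le> \<epsilon> * norm (ln T)"
    using eventually_integral_diff_le[OF \<epsilon>] eventually_ge_at_top[of 1]
  proof eventually_elim
    case (elim T)
    then have "- (\<epsilon> * ln T) \<le> B" using \<epsilon> by (simp add: field_simps)
    then show ?case using elim by auto
  qed
qed

lemma interval_integral_integrand: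
  "1 \<le> T \<Longrightarrow> (LBINT t=1..T. 1 / (t * \<psi> t) * X t) = integral {1..T} integrand"
  using interval_integral_eq_integral[OF _ set_integrable_integrand[of 1 T]]
  by (simp add: integrand_def one_ereal_def)

lemma interval_integral_integrand_dil:
  "1 \<le> T \<Longrightarrow> (LBINT t=1..T. 1 / (t * \<psi> t) * X (dil t)) = integral {1..T} integrand_dil"
  using interval_integral_eq_integral[OF _ set_integrable_integrand_dil[of 1 T]]
  by (simp add: integrand_dil_def one_ereal_def)

end

lemma Psi_class_pos:
  assumes "\<psi> \<in> Psi_class" "0 < t"
  shows "0 < \<psi> t"
proof -
  have sm: "strict_mono_on {0..} \<psi>" and "\<psi> \<in> O[at_right 0](\<lambda>t. t)"
    using assms(1) unfolding Psi_class_def by auto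
  then obtain K where K: "\<forall>\<^sub>F s in at_right 0. norm (\<psi> s) \<le> K * norm s"
    by (elim landau_o.bigE) auto
  have "\<forall>\<^sub>F s in at_right 0. - K * s \<le> \<psi> (t / 2)"
  proof -
    have "\<forall>\<^sub>F s in at_right 0. s \<in> {0<..<t / 2}" using assms(2) by (intro eventually_at_right_real) simp
    with K show ?thesis
  proof eventually_elim
    case (elim s)
    then have "\<psi> s < \<psi> (t / 2)" using strict_mono_onD[OF sm, of s "t / 2"] by simp
    then show ?case using elim by auto
  qed
  qed
  moreover have "((\<lambda>s. - K * s) \<longlongrightarrow> 0) (at_right 0)"
    by (auto intro!: tendsto_eq_intros)
  ultimately have "0 \<le> \<psi> (t / 2)"
    by (intro tendsto_le[OF trivial_limit_at_right_real tendsto_const]) auto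
  moreover have "\<psi> (t / 2) < \<psi> t" using strict_mono_onD[OF sm, of "t / 2" t] assms(2) by simp
  ultimately show ?thesis by simp
qed

lemma psi_regular_if_Psi_class:
  assumes "\<psi> \<in> Psi_class" "((\<lambda>t. \<psi> (t * \<psi> t) / \<psi> t) \<longlongrightarrow> 1) at_top"
  shows "psi_regular \<psi>"
proof
  show "0 < \<psi> t" if "0 < t" for t using Psi_class_pos[OF assms(1) that] .
  have "strict_mono_on {0..} \<psi>" using assms(1) unfolding Psi_class_def by auto
  then show "\<psi> s \<le> \<psi> t" if "0 < s" "s \<le> t" for s t using that by (auto intro: strict_mono_on_leD)
  show "filterlim \<psi> at_top at_top" using assms(1) unfolding Psi_class_def by auto
qed (rule assms(2))

lemma M_psi_set_integrable:
  assumes "x \<in> M_psi \<psi>"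
  shows "set_integrable lborel {0<..<u} x"
proof -
  from assms obtain B where meas: "x \<in> borel_measurable (restrict_space lborel {0<..})"
    and B: "\<And>u. 0 < u \<Longrightarrow> \<bar>x u\<bar> \<le> B"
    unfolding M_psi_def by auto
  have "(\<lambda>s. indicator {0<..} s *\<^sub>R x s) \<in> borel_measurable lborel"
    using meas by (subst borel_measurable_restrict_space_iff[symmetric]) auto
  then have "(\<lambda>s. indicator {0<..<u} s * (indicator {0<..} s *\<^sub>R x s)) \<in> borel_measurable lborel"
    by measurable
  moreover have "(\<lambda>s. indicator {0<..<u} s * (indicator {0<..} s *\<^sub>R x s)) = (\<lambda>s. indicator {0<..<u} s *\<^sub>R x s)"
    by (auto simp: fun_eq_iff split: split_indicator)
  moreover have "emeasure lborel {0<..<u} < \<infinity>" by (cases "0 \<le> u") auto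
  ultimately show ?thesis
    unfolding set_integrable_def
    by (intro integrableI_bounded_set[where A="{0<..<u}" and B=B]) (auto intro: B split: split_indicator)
qed

lemma psi_primitive_if_M_psi:
  assumes \<psi>: "\<psi> \<in> Psi_class" "((\<lambda>t. \<psi> (t * \<psi> t) / \<psi> t) \<longlongrightarrow> 1) at_top"
    and x: "x \<in> M_psi \<psi>" "\<And>t. 0 < t \<Longrightarrow> 0 \<le> x t" "\<And>t. 0 < t \<Longrightarrow> x t = rearr x t"
    and c: "0 < c"
  shows "\<exists>C. psi_primitive \<psi> (\<lambda>u. LBINT s=0..u. x s) c C"
proof -
  interpret psi_regular \<psi> by (rule psi_regular_if_Psi_class[OF \<psi>])
  from x(1) obtain C where C: "\<And>t. 0 < t \<Longrightarrow> 1 / \<psi> t * (LBINT s=0..t. rearr x s) \<le> C"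
    unfolding M_psi_def by auto
  have int: "x integrable_on {0<..<u}" for u
    by (rule set_borel_integral_eq_integral(1)[OF M_psi_set_integrable[OF x(1)]])
  have eq: "(LBINT s=0..u. x s) = integral {0<..<u} x" if "0 \<le> u" for u
  proof -
    have "(LBINT s=0..u. x s) = (LBINT s=ereal 0..ereal u. x s)" by (simp add: zero_ereal_def)
    also have "\<dots> = integral (einterval (ereal 0) (ereal u)) x"
      using that M_psi_set_integrable[OF x(1)] by (intro interval_integral_eq_integral') simp_all
    finally show ?thesis by simp
  qed
  show ?thesis
  proof (intro exI[of _ C] psi_primitive.intro psi_primitive_axioms.intro)
    show "psi_regular \<psi>" ..
    show "0 \<le> (LBINT s=0..u. x s)" if "0 \<le> u" for u :: real
      unfolding eq[OF that] using int x(2) by (intro integral_nonneg) auto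
    show "(LBINT s=0..u. x s) \<le> (LBINT s=0..v. x s)" if "0 \<le> u" "u \<le> v" for u v :: real
      unfolding eq[OF that(1)] eq[OF order_trans[OF that]] using int x(2) that
      by (intro integral_subset_le) auto
    show "(LBINT s=0..u. x s) \<le> C * \<psi> u" if u: "0 < u" for u :: real
    proof -
      have "(LBINT s=0..u. x s) = (LBINT s=0..u. rearr x s)"
        using u x(3) by (intro interval_integral_cong) (auto simp: einterval_iff)
      then show ?thesis using C[OF u] pos[OF u] by (simp add: field_simps)
    qed
  qed (rule c)
qed

theorem lemma2p4:
  fixes \<psi> x :: "real \<Rightarrow> real" and c :: real
  assumes "\<psi> \<in> Psi_class"
    and "((\<lambda>t. \<psi> (t * \<psi> t) / \<psi> t) \<longlongrightarrow> 1) at_top"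
    and "x \<in> M_psi \<psi>"
    and "\<forall>t>0. x t > 0"
    and "antimono_on {0<..} x"
    and "\<forall>t>0. x t = rearr x t"
    and "c > 0"
  shows "((\<lambda>T. (1 / ln T) * (LBINT t=1..T. (1 / (t * \<psi> t)) * (LBINT s=0..c * t * \<psi> t. x s))
              - (1 / ln T) * (LBINT t=1..T. (1 / (t * \<psi> t)) * (LBINT s=0..t. x s)))
          \<longlongrightarrow> 0) at_top"
proof -
  obtain C where "psi_primitive \<psi> (\<lambda>u. LBINT s=0..u. x s) c C"
    using psi_primitive_if_M_psi[OF assms(1-3) _ _ assms(7)] assms(4,6) by (meson less_imp_le)
  then interpret psi_primitive \<psi> "\<lambda>u. LBINT s=0..u. x s" c C .
  have "((\<lambda>T. (integral {1..T} integrand_dil - integral {1..T} integrand) / ln T) \<longlongrightarrow> 0) at_top"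
    by (rule smalloD_tendsto[OF integral_diff_smallo])
  moreover have "\<forall>\<^sub>F T in at_top.
      (integral {1..T} integrand_dil - integral {1..T} integrand) / ln T
    = (1 / ln T) * (LBINT t=1..T. (1 / (t * \<psi> t)) * (LBINT s=0..c * t * \<psi> t. x s))
      - (1 / ln T) * (LBINT t=1..T. (1 / (t * \<psi> t)) * (LBINT s=0..t. x s))"
    using eventually_ge_at_top[of 1]
  proof eventually_elim
    case (elim T)
    show ?case
      unfolding interval_integral_integrand[OF elim] interval_integral_integrand_dil[OF elim]
      by (simp add: diff_divide_distrib)
  qed
  ultimately show ?thesis by (rule Lim_transform_eventually)
qed

end
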